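(* Let $D$ be an integral domain, $T$ a flat overring of $D$, and $\Lambda$ a complete family of flat overrings of $T$. If $\mathrm{Int}(D)S=\mathrm{Int}(S)$ for every $S\in\Lambda$, then $\mathrm{Int}(D)T=\mathrm{Int}(T)$.
   Context: $K$ is the quotient field of $D$; an overring of a domain $R$ is a ring between $R$ and $K$, flat if flat as an $R$-module. $\Lambda$ is complete (over $T$) if every ideal $I$ of $T$ satisfies $I=\bigcap_{S\in\Lambda}IS$. $\mathrm{Int}(A)=\{f\in K[X]\mid f(A)\subseteq A\}$; $\mathrm{Int}(D)S$ is the subring of $K[X]$ of finite sums $\sum f_is_i$ with $f_i\in\mathrm{Int}(D)$, $s_i\in S$. *)

theory Defs
  imports "HOL-Computational_Algebra.Polynomial"
begin

text \<open>All rings live inside a fixed field 'k, which plays the role of K,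
the quotient field of D.\<close>

definition is_subring :: "'k::field set \<Rightarrow> bool" where
  "is_subring R \<longleftrightarrow> 0 \<in> R \<and> 1 \<in> R \<and>
     (\<forall>x\<in>R. \<forall>y\<in>R. x + y \<in> R \<and> x - y \<in> R \<and> x * y \<in> R)"

definition quotient_field_of :: "'k::field set \<Rightarrow> bool" where
  "quotient_field_of D \<longleftrightarrow> is_subring D \<and>
     (\<forall>x. \<exists>a\<in>D. \<exists>b\<in>D. b \<noteq> 0 \<and> x = a / b)"

definition overring :: "'k::field set \<Rightarrow> 'k set \<Rightarrow> bool" where
  "overring R S \<longleftrightarrow> is_subring S \<and> R \<subseteq> S"

text \<open>Flatness of an R-submodule M of K as an R-module, via the equational
  criterion of flatness (every finite relation is trivial).\<close>
definition flat_module :: "'k::field set \<Rightarrow> 'k set \<Rightarrow> bool" where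
  "flat_module R M \<longleftrightarrow>
     (\<forall>(n::nat) (r::nat \<Rightarrow> 'k) m.
        (\<forall>i<n. r i \<in> R \<and> m i \<in> M) \<and> (\<Sum>i<n. r i * m i) = 0 \<longrightarrow>
        (\<exists>(k::nat) (a::nat \<Rightarrow> nat \<Rightarrow> 'k) m'.
            (\<forall>j<k. m' j \<in> M) \<and> (\<forall>i<n. \<forall>j<k. a i j \<in> R) \<and>
            (\<forall>i<n. m i = (\<Sum>j<k. a i j * m' j)) \<and>
            (\<forall>j<k. (\<Sum>i<n. r i * a i j) = 0)))"

definition flat_overring :: "'k::field set \<Rightarrow> 'k set \<Rightarrow> bool" where
  "flat_overring R S \<longleftrightarrow> overring R S \<and> flat_module R S"

definition is_ideal :: "'k::field set \<Rightarrow> 'k set \<Rightarrow> bool" where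
  "is_ideal I T \<longleftrightarrow> I \<subseteq> T \<and> 0 \<in> I \<and>
     (\<forall>x\<in>I. \<forall>y\<in>I. x + y \<in> I) \<and> (\<forall>t\<in>T. \<forall>x\<in>I. t * x \<in> I)"

definition ext_ideal :: "'k::field set \<Rightarrow> 'k set \<Rightarrow> 'k set" where
  "ext_ideal I S = {x. \<exists>(n::nat) a s. (\<forall>i<n. a i \<in> I \<and> s i \<in> S) \<and>
                        x = (\<Sum>i<n. a i * s i)}"

definition complete_family :: "'k::field set set \<Rightarrow> 'k set \<Rightarrow> bool" where
  "complete_family \<Lambda> T \<longleftrightarrow>
     (\<forall>I. is_ideal I T \<longrightarrow> I = (\<Inter>S\<in>\<Lambda>. ext_ideal I S))"

definition IntPoly :: "'k::field set \<Rightarrow> 'k poly set" where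
  "IntPoly A = {f. \<forall>a\<in>A. poly f a \<in> A}"

definition IntPoly_ext :: "'k::field set \<Rightarrow> 'k set \<Rightarrow> 'k poly set" where
  "IntPoly_ext D S = {p. \<exists>(n::nat) f s. (\<forall>i<n. f i \<in> IntPoly D \<and> s i \<in> S) \<and>
                          p = (\<Sum>i<n. smult (s i) (f i))}"

end

theory Submission
  imports Defs
begin

(*
  A flat overring S of T satisfies Int(T) \<subseteq> Int(S): for x = a/b in S, flatness applied to the
  relation a * 1 - b * x = 0 makes the conductor (T :_T x) extend to the unit ideal of S, and
  for every c in that conductor some power of c carries f(x) into T, because f(x) is recovered
  up to powers of c from the values f(c^k x) \<in> T. So every f \<in> Int(T) lies in
  Int(D)S = Int(S) for S \<in> \<Lambda>; writing f = \<Sum> s_i f_i there, the ideal {t \<in> T. t f \<in> Int(D)T}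
  contains the conductor of the s_i, which again extends to the unit ideal of S. Completeness
  of \<Lambda> then puts 1 into that ideal. The inclusion Int(D) \<subseteq> Int(T) is completeness applied
  to the ideal T itself.
*)

lemma
  assumes "is_subring R"
  shows subring_zero: "0 \<in> R"
    and subring_one: "1 \<in> R"
    and subring_add: "x \<in> R \<Longrightarrow> y \<in> R \<Longrightarrow> x + y \<in> R"
    and subring_diff: "x \<in> R \<Longrightarrow> y \<in> R \<Longrightarrow> x - y \<in> R"
    and subring_mult: "x \<in> R \<Longrightarrow> y \<in> R \<Longrightarrow> x * y \<in> R"
  using assms unfolding is_subring_def by auto

lemma subring_power: "is_subring R \<Longrightarrow> x \<in> R \<Longrightarrow> x ^ n \<in> R"
  by (induction n) (simp_all add: subring_one subring_mult)

lemma subring_of_nat: "is_subring R \<Longrightarrow> of_nat n \<in> R"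
  by (induction n) (simp_all add: subring_zero subring_one subring_add)

lemma
  assumes "is_ideal I R"
  shows ideal_subset: "I \<subseteq> R"
    and ideal_zero: "0 \<in> I"
    and ideal_add: "x \<in> I \<Longrightarrow> y \<in> I \<Longrightarrow> x + y \<in> I"
    and ideal_mult_left: "r \<in> R \<Longrightarrow> x \<in> I \<Longrightarrow> r * x \<in> I"
  using assms unfolding is_ideal_def by auto

lemma ideal_mult_right: "is_ideal I R \<Longrightarrow> x \<in> I \<Longrightarrow> r \<in> R \<Longrightarrow> x * r \<in> I"
  using ideal_mult_left[of I R r x] by (simp add: mult.commute)

lemma ideal_sum:
  assumes "is_ideal I R" "\<And>i. i \<in> A \<Longrightarrow> g i \<in> I"
  shows "sum g A \<in> I"
  using assms(2)
  by (induction A rule: infinite_finite_induct)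
    (simp_all add: ideal_zero[OF assms(1)] ideal_add[OF assms(1)])

lemma subring_is_ideal: "is_subring R \<Longrightarrow> is_ideal R R"
  unfolding is_subring_def is_ideal_def by blast

lemma quotient_field_of_overring:
  "quotient_field_of D \<Longrightarrow> overring D T \<Longrightarrow> quotient_field_of T"
  unfolding quotient_field_of_def overring_def by blast

lemma smult_sum_right: "smult c (sum f A) = (\<Sum>x\<in>A. smult c (f x))"
  by (induction A rule: infinite_finite_induct) (simp_all add: smult_add_right)

lemma ideal_radical:
  assumes R: "is_subring R" and J: "is_ideal J R"
  shows "is_ideal {x \<in> R. \<exists>N. x ^ N \<in> J} R"
proof -
  have binomial: "(x + y) ^ (a + b) \<in> J"
    if x: "x \<in> R" "x ^ a \<in> J" and y: "y \<in> R" "y ^ b \<in> J" for x y a b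
  proof -
    have "of_nat (a + b choose i) * x ^ i * y ^ (a + b - i) \<in> J" for i
    proof (cases "a \<le> i")
      case True
      then have "of_nat (a + b choose i) * x ^ i * y ^ (a + b - i) =
          (of_nat (a + b choose i) * x ^ (i - a) * y ^ (a + b - i)) * x ^ a"
        by (simp add: mult_ac flip: power_add)
      also have "\<dots> \<in> J"
        using x y
        by (intro ideal_mult_left[OF J] subring_mult[OF R] subring_power[OF R] subring_of_nat[OF R])
      finally show ?thesis .
    next
      case False
      then have "a + b - i = (a - i) + b"
        by simp
      then have "of_nat (a + b choose i) * x ^ i * y ^ (a + b - i) =
          (of_nat (a + b choose i) * x ^ i * y ^ (a - i)) * y ^ b"
        by (simp add: power_add mult_ac)
      also have "\<dots> \<in> J"
        using x y
        by (intro ideal_mult_left[OF J] subring_mult[OF R] subring_power[OF R] subring_of_nat[OF R])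
      finally show ?thesis .
    qed
    then show ?thesis
      by (simp add: binomial_ring ideal_sum[OF J])
  qed
  show ?thesis
    unfolding is_ideal_def
  proof (intro conjI ballI)
    show "0 \<in> {x \<in> R. \<exists>N. x ^ N \<in> J}"
      using subring_zero[OF R] ideal_zero[OF J] by (auto intro: exI[of _ 1])
    fix x y assume "x \<in> {x \<in> R. \<exists>N. x ^ N \<in> J}" "y \<in> {x \<in> R. \<exists>N. x ^ N \<in> J}"
    then show "x + y \<in> {x \<in> R. \<exists>N. x ^ N \<in> J}"
      using binomial subring_add[OF R] by blast
  next
    fix r x assume r: "r \<in> R" and "x \<in> {x \<in> R. \<exists>N. x ^ N \<in> J}"
    then obtain N where x: "x \<in> R" "x ^ N \<in> J" by blast
    have "(r * x) ^ N \<in> J"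
      unfolding power_mult_distrib using r x by (intro ideal_mult_left[OF J] subring_power[OF R])
    then show "r * x \<in> {x \<in> R. \<exists>N. x ^ N \<in> J}"
      using r x subring_mult[OF R] by blast
  qed blast
qed

definition sums_of_products ::
    "('a \<Rightarrow> 'b \<Rightarrow> 'c::comm_monoid_add) \<Rightarrow> 'a set \<Rightarrow> 'b set \<Rightarrow> 'c set" where
  "sums_of_products h A B =
     {x. \<exists>(n::nat) a b. (\<forall>i<n. a i \<in> A \<and> b i \<in> B) \<and> x = (\<Sum>i<n. h (a i) (b i))}"

lemma ext_ideal_eq_sums_of_products: "ext_ideal I S = sums_of_products (*) I S"
  unfolding ext_ideal_def sums_of_products_def ..

lemma IntPoly_ext_eq_sums_of_products:
  "IntPoly_ext D S = sums_of_products (\<lambda>f s. smult s f) (IntPoly D) S"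
  unfolding IntPoly_ext_def sums_of_products_def ..

lemma sums_of_products_zero: "0 \<in> sums_of_products h A B"
  unfolding sums_of_products_def by (auto intro: exI[of _ 0])

lemma sums_of_products_add_product:
  assumes "x \<in> sums_of_products h A B" "a \<in> A" "b \<in> B"
  shows "x + h a b \<in> sums_of_products h A B"
proof -
  obtain n :: nat and as bs
    where x: "\<forall>i<n. as i \<in> A \<and> bs i \<in> B" "x = (\<Sum>i<n. h (as i) (bs i))"
    using assms(1) unfolding sums_of_products_def by blast
  have "x + h a b = (\<Sum>i<Suc n. h ((as(n := a)) i) ((bs(n := b)) i))"
    using x(2) by simp
  moreover have "\<forall>i<Suc n. (as(n := a)) i \<in> A \<and> (bs(n := b)) i \<in> B"
    using x(1) assms(2,3) by (simp add: less_Suc_eq)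
  ultimately show ?thesis
    unfolding sums_of_products_def by blast
qed

lemma sums_of_products_product:
  "a \<in> A \<Longrightarrow> b \<in> B \<Longrightarrow> h a b \<in> sums_of_products h A B"
  using sums_of_products_add_product[OF sums_of_products_zero] by fastforce

lemma sums_of_products_least:
  assumes "0 \<in> C" "\<And>x y. x \<in> C \<Longrightarrow> y \<in> C \<Longrightarrow> x + y \<in> C"
    and "\<And>a b. a \<in> A \<Longrightarrow> b \<in> B \<Longrightarrow> h a b \<in> C"
  shows "sums_of_products h A B \<subseteq> C"
proof
  fix x assume "x \<in> sums_of_products h A B"
  then obtain n :: nat and a b where "\<forall>i<n. a i \<in> A \<and> b i \<in> B" "x = (\<Sum>i<n. h (a i) (b i))"
    unfolding sums_of_products_def by blast
  then show "x \<in> C"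
    by (induction n arbitrary: x) (simp_all add: assms)
qed

lemma sums_of_products_add:
  assumes "x \<in> sums_of_products h A B" "y \<in> sums_of_products h A B"
  shows "x + y \<in> sums_of_products h A B"
proof -
  have "sums_of_products h A B \<subseteq>
      {y. \<forall>x \<in> sums_of_products h A B. x + y \<in> sums_of_products h A B}"
    by (rule sums_of_products_least)
      (auto simp: sums_of_products_add_product simp flip: add.assoc)
  then show ?thesis
    using assms by blast
qed

lemma sums_of_products_mono:
  "A \<subseteq> A' \<Longrightarrow> sums_of_products h A B \<subseteq> sums_of_products h A' B"
  unfolding sums_of_products_def by blast

lemma ext_ideal_subset_ideal:
  assumes "is_ideal J S" "C \<subseteq> J"
  shows "ext_ideal C S \<subseteq> J"
  unfolding ext_ideal_eq_sums_of_products
  using assms by (intro sums_of_products_least) (auto simp: ideal_zero ideal_add ideal_mult_right)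

lemma ext_ideal_mult:
  assumes S: "is_subring S" and "x \<in> ext_ideal I S" "y \<in> ext_ideal J S"
    and L: "\<And>a b. a \<in> I \<Longrightarrow> b \<in> J \<Longrightarrow> a * b \<in> L"
  shows "x * y \<in> ext_ideal L S"
proof -
  have generator_times_y: "a * s * y \<in> ext_ideal L S" if "a \<in> I" "s \<in> S" for a s
  proof -
    have "ext_ideal J S \<subseteq> {y. a * s * y \<in> ext_ideal L S}"
      unfolding ext_ideal_eq_sums_of_products
    proof (rule sums_of_products_least)
      fix b t assume "b \<in> J" "t \<in> S"
      then have "(a * b) * (s * t) \<in> sums_of_products (*) L S"
        using that by (intro sums_of_products_product L subring_mult[OF S])
      then show "b * t \<in> {y. a * s * y \<in> sums_of_products (*) L S}"
        by (simp add: mult_ac)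
    qed (simp_all add: sums_of_products_zero sums_of_products_add distrib_left)
    then show ?thesis
      using assms(3) by blast
  qed
  have "ext_ideal I S \<subseteq> {x. x * y \<in> ext_ideal L S}"
    unfolding ext_ideal_eq_sums_of_products
    by (rule sums_of_products_least)
      (use generator_times_y in \<open>simp_all add: sums_of_products_zero sums_of_products_add
        distrib_right ext_ideal_eq_sums_of_products\<close>)
  then show ?thesis
    using assms(2) by blast
qed

lemma ext_ideal_Int_one:
  assumes "is_subring S" "is_ideal I T" "is_ideal J T"
    and "1 \<in> ext_ideal I S" "1 \<in> ext_ideal J S"
  shows "1 \<in> ext_ideal (I \<inter> J) S"
proof -
  have "a * b \<in> I \<inter> J" if "a \<in> I" "b \<in> J" for a b
    using that assms(2,3) ideal_subset by (blast intro: ideal_mult_left ideal_mult_right)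
  then have "1 * 1 \<in> ext_ideal (I \<inter> J) S"
    using ext_ideal_mult[OF assms(1,4,5)] by blast
  then show ?thesis
    by simp
qed

lemma one_mem_ideal_if_powers_generate:
  assumes S: "is_subring S" and J: "is_ideal J S"
    and "C \<subseteq> S" "1 \<in> ext_ideal C S" "\<And>c. c \<in> C \<Longrightarrow> \<exists>N. c ^ N \<in> J"
  shows "1 \<in> J"
proof -
  have "ext_ideal C S \<subseteq> {x \<in> S. \<exists>N. x ^ N \<in> J}"
    using assms(3,5) by (intro ext_ideal_subset_ideal ideal_radical[OF S J]) blast
  then obtain N where "(1::'a) ^ N \<in> J"
    using assms(4) by blast
  then show ?thesis
    by simp
qed

definition conductor :: "'k::field set \<Rightarrow> 'k set \<Rightarrow> 'k set" where
  "conductor T X = {c \<in> T. \<forall>x\<in>X. c * x \<in> T}"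

lemma ideal_conductor: "is_subring T \<Longrightarrow> is_ideal (conductor T X) T"
  unfolding conductor_def is_ideal_def
  by (auto simp: subring_zero subring_add subring_mult distrib_right mult.assoc)

lemma conductor_empty: "conductor T {} = T"
  unfolding conductor_def by simp

lemma conductor_insert: "conductor T (insert x X) = conductor T {x} \<inter> conductor T X"
  unfolding conductor_def by blast

lemma one_mem_ext_ideal_conductor:
  assumes Q: "quotient_field_of T" and TS: "flat_overring T S" and x: "x \<in> S"
  shows "1 \<in> ext_ideal (conductor T {x}) S"
proof -
  have T: "is_subring T" and S: "is_subring S" and flat: "flat_module T S"
    using Q TS unfolding quotient_field_of_def flat_overring_def overring_def by auto
  obtain a b where ab: "a \<in> T" "b \<in> T" "b \<noteq> 0" "x = a / b"
    using Q unfolding quotient_field_of_def by blast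
  \<comment> \<open>apply the equational criterion of flatness to the relation \<open>a * 1 - b * x = 0\<close>\<close>
  define r where "r = (\<lambda>i::nat. if i = 0 then a else - b)"
  define m where "m = (\<lambda>i::nat. if i = 0 then 1 else x)"
  have "\<forall>i<2. r i \<in> T \<and> m i \<in> S"
    using ab x subring_one[OF S] subring_diff[OF T subring_zero[OF T] ab(2)]
    by (simp add: r_def m_def less_2_cases_iff)
  moreover have "(\<Sum>i<2. r i * m i) = 0"
    using ab by (simp add: r_def m_def numeral_2_eq_2)
  ultimately obtain k :: nat and \<alpha> m' where
    m': "\<forall>j<k. m' j \<in> S" and \<alpha>: "\<forall>i<2. \<forall>j<k. \<alpha> i j \<in> T"
    and lin: "\<forall>i<2. m i = (\<Sum>j<k. \<alpha> i j * m' j)"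
    and rel: "\<forall>j<k. (\<Sum>i<2. r i * \<alpha> i j) = 0"
    using flat[unfolded flat_module_def, rule_format, of 2 r m] by blast
  have "\<alpha> 0 j \<in> conductor T {x}" if j: "j < k" for j
  proof -
    have "a * \<alpha> 0 j = b * \<alpha> 1 j"
      using rel j by (simp add: r_def numeral_2_eq_2)
    then have "b * (\<alpha> 0 j * x) = b * \<alpha> 1 j"
      using ab(3,4) by (simp add: mult.commute)
    then have "\<alpha> 0 j * x = \<alpha> 1 j"
      using ab(3) by simp
    then show ?thesis
      using \<alpha> j unfolding conductor_def by auto
  qed
  then have "(\<Sum>j<k. \<alpha> 0 j * m' j) \<in> ext_ideal (conductor T {x}) S"
    using m' unfolding ext_ideal_def by blast
  then show ?thesis
    using lin[rule_format, of 0] by (simp add: m_def)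
qed

lemma one_mem_ext_ideal_conductor_finite:
  assumes Q: "quotient_field_of T" and TS: "flat_overring T S" and "finite X" "X \<subseteq> S"
  shows "1 \<in> ext_ideal (conductor T X) S"
  using assms(3,4)
proof (induction X rule: finite_induct)
  case empty
  have "1 \<in> T" "1 \<in> S"
    using Q TS unfolding quotient_field_of_def flat_overring_def overring_def
    by (auto simp: subring_one)
  then have "1 * 1 \<in> ext_ideal T S"
    unfolding ext_ideal_eq_sums_of_products by (rule sums_of_products_product)
  then show ?case
    by (simp add: conductor_empty)
next
  case (insert x X)
  have T: "is_subring T" and S: "is_subring S"
    using Q TS unfolding quotient_field_of_def flat_overring_def overring_def by auto
  show ?case
    unfolding conductor_insert[of T x X]
    using insert one_mem_ext_ideal_conductor[OF Q TS]
    by (intro ext_ideal_Int_one[OF S ideal_conductor[OF T] ideal_conductor[OF T]]) auto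
qed

lemma poly_mem_if_geometric_values_mem:
  fixes p :: "'a::comm_ring_1 poly"
  assumes diff: "\<And>x y. x \<in> M \<Longrightarrow> y \<in> M \<Longrightarrow> x - y \<in> M"
    and mult: "\<And>x. x \<in> M \<Longrightarrow> s * x \<in> M"
    and cancel: "\<And>x. s * x \<in> M \<Longrightarrow> x \<in> M"
  shows "degree p \<le> n \<Longrightarrow> (\<And>k. 1 \<le> k \<Longrightarrow> k \<le> n + 1 \<Longrightarrow> poly p (s ^ k * z) \<in> M)
    \<Longrightarrow> poly p z \<in> M"
proof (induction n arbitrary: p)
  case 0
  then obtain c where "p = [:c:]"
    by (metis degree_eq_zeroE le_zero_eq)
  then show ?case
    using "0.prems"(2)[of 1] by simp
next
  case (Suc n)
  have power_mult: "s ^ m * x \<in> M" if "x \<in> M" for x m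
    using that by (induction m) (simp_all add: mult mult.assoc)
  have power_cancel: "x \<in> M" if "s ^ m * x \<in> M" for x m
    using that by (induction m arbitrary: x) (auto simp: mult.assoc intro: cancel)
  \<comment> \<open>the leading terms of \<open>p(sX)\<close> and \<open>s^(n+1) p(X)\<close> cancel\<close>
  define q where "q = pcompose p [:0, s:] - smult (s ^ Suc n) p"
  have poly_q: "poly q y = poly p (s * y) - s ^ Suc n * poly p y" for y
    by (simp add: q_def poly_pcompose mult.commute)
  have "coeff q i = 0" if "n < i" for i
  proof (cases "i = Suc n")
    case False
    then have "coeff p i = 0"
      using Suc.prems(1) that by (simp add: coeff_eq_0)
    then show ?thesis
      by (simp add: q_def coeff_pcompose_linear)
  qed (simp add: q_def coeff_pcompose_linear)
  then have "degree q \<le> n"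
    by (simp add: degree_le)
  moreover have "poly q (s ^ k * z) \<in> M" if "1 \<le> k" "k \<le> n + 1" for k
  proof -
    have "poly p (s * (s ^ k * z)) \<in> M" "poly p (s ^ k * z) \<in> M"
      using that Suc.prems(2)[of "Suc k"] Suc.prems(2)[of k] by (simp_all add: mult.assoc)
    then show ?thesis
      unfolding poly_q by (intro diff power_mult)
  qed
  ultimately have "poly q z \<in> M"
    by (rule Suc.IH)
  then have "poly p (s * z) - poly q z \<in> M"
    using Suc.prems(2)[of 1] by (simp add: diff)
  then have "s ^ Suc n * poly p z \<in> M"
    by (simp add: poly_q)
  then show ?case
    by (rule power_cancel)
qed

lemma IntPoly_value_mem_localization:
  assumes T: "is_subring T" and c: "c \<in> T" "c * x \<in> T" and f: "f \<in> IntPoly T"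
  shows "\<exists>N. c ^ N * poly f x \<in> T"
proof -
  define M where "M = {y. \<exists>N. c ^ N * y \<in> T}"
  have diff: "u - v \<in> M" if uv: "u \<in> M" "v \<in> M" for u v
  proof -
    obtain N1 N2 where N: "c ^ N1 * u \<in> T" "c ^ N2 * v \<in> T"
      using uv unfolding M_def by blast
    have "c ^ N2 * (c ^ N1 * u) - c ^ N1 * (c ^ N2 * v) \<in> T"
      using subring_power[OF T c(1)] N by (simp add: subring_diff[OF T] subring_mult[OF T])
    then have "c ^ (N1 + N2) * (u - v) \<in> T"
      by (simp add: power_add algebra_simps)
    then show ?thesis
      unfolding M_def by blast
  qed
  have mult: "c * u \<in> M" if u: "u \<in> M" for u
  proof -
    obtain N where "c ^ N * u \<in> T"
      using u unfolding M_def by blast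
    then have "c ^ N * (c * u) \<in> T"
      using subring_mult[OF T c(1)] by (metis mult.left_commute)
    then show ?thesis
      unfolding M_def by blast
  qed
  have cancel: "u \<in> M" if cu: "c * u \<in> M" for u
  proof -
    obtain N where "c ^ N * (c * u) \<in> T"
      using cu unfolding M_def by blast
    then have "c ^ Suc N * u \<in> T"
      by (simp add: mult_ac)
    then show ?thesis
      unfolding M_def by blast
  qed
  have at_geometric_points: "poly f (c ^ k * x) \<in> M" if "1 \<le> k" for k
  proof -
    have "c ^ k * x = c ^ (k - 1) * (c * x)"
      using that by (simp add: mult.assoc flip: power_Suc2)
    also have "\<dots> \<in> T"
      by (rule subring_mult[OF T subring_power[OF T c(1)] c(2)])
    finally have "poly f (c ^ k * x) \<in> T"
      using f unfolding IntPoly_def by blast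
    then show ?thesis
      unfolding M_def by (auto intro: exI[of _ 0])
  qed
  have "poly f x \<in> M"
    using poly_mem_if_geometric_values_mem[of M c f "degree f" x, OF diff mult cancel]
      at_geometric_points
    by blast
  then show ?thesis
    unfolding M_def by blast
qed

lemma IntPoly_subset_flat_overring:
  assumes Q: "quotient_field_of T" and TS: "flat_overring T S"
  shows "IntPoly T \<subseteq> IntPoly S"
proof
  have T: "is_subring T" and S: "is_subring S" and "T \<subseteq> S"
    using Q TS unfolding quotient_field_of_def flat_overring_def overring_def by auto
  fix f assume f: "f \<in> IntPoly T"
  show "f \<in> IntPoly S"
    unfolding IntPoly_def
  proof (intro CollectI ballI)
    fix x assume x: "x \<in> S"
    have "1 \<in> conductor S {poly f x}"
    proof (rule one_mem_ideal_if_powers_generate[OF S ideal_conductor[OF S]])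
      show "conductor T {x} \<subseteq> S"
        using \<open>T \<subseteq> S\<close> unfolding conductor_def by blast
      show "1 \<in> ext_ideal (conductor T {x}) S"
        using Q TS x by (rule one_mem_ext_ideal_conductor)
      fix c assume "c \<in> conductor T {x}"
      then have "c \<in> T" "c * x \<in> T"
        unfolding conductor_def by auto
      then obtain N where "c ^ N * poly f x \<in> T"
        using IntPoly_value_mem_localization[OF T _ _ f] by blast
      then show "\<exists>N. c ^ N \<in> conductor S {poly f x}"
        using \<open>c \<in> T\<close> \<open>T \<subseteq> S\<close> subring_power[OF T] unfolding conductor_def by blast
    qed
    then show "poly f x \<in> S"
      unfolding conductor_def by simp
  qed
qed

lemma Inter_subset_complete_family:
  assumes "complete_family \<Lambda> T" "is_subring T"
  shows "\<Inter>\<Lambda> \<subseteq> T"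
proof
  fix x assume x: "x \<in> \<Inter>\<Lambda>"
  have "1 * x \<in> ext_ideal T S" if "S \<in> \<Lambda>" for S
    unfolding ext_ideal_eq_sums_of_products
    using x that subring_one[OF assms(2)] by (intro sums_of_products_product) auto
  then have "x \<in> (\<Inter>S\<in>\<Lambda>. ext_ideal T S)"
    by simp
  then show "x \<in> T"
    using assms subring_is_ideal unfolding complete_family_def by blast
qed

lemma INT_IntPoly_subset_complete_family:
  assumes "complete_family \<Lambda> T" "is_subring T" "\<And>S. S \<in> \<Lambda> \<Longrightarrow> T \<subseteq> S"
  shows "(\<Inter>S\<in>\<Lambda>. IntPoly S) \<subseteq> IntPoly T"
proof
  fix f assume "f \<in> (\<Inter>S\<in>\<Lambda>. IntPoly S)"
  then have "poly f t \<in> \<Inter>\<Lambda>" if "t \<in> T" for t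
    using that assms(3) unfolding IntPoly_def by blast
  then show "f \<in> IntPoly T"
    using Inter_subset_complete_family[OF assms(1,2)] unfolding IntPoly_def by blast
qed

lemma IntPoly_subset_IntPoly_ext: "1 \<in> S \<Longrightarrow> IntPoly D \<subseteq> IntPoly_ext D S"
  unfolding IntPoly_ext_eq_sums_of_products
  using sums_of_products_product[of _ "IntPoly D" 1 S "\<lambda>f s. smult s f"] by auto

lemma IntPoly_ext_subset_IntPoly:
  assumes "is_subring T" "IntPoly D \<subseteq> IntPoly T"
  shows "IntPoly_ext D T \<subseteq> IntPoly T"
  unfolding IntPoly_ext_eq_sums_of_products
  using assms
  by (intro sums_of_products_least) (auto simp: IntPoly_def subring_zero subring_add subring_mult)

lemma IntPoly_ext_smult:
  assumes "is_subring S" "t \<in> S" "p \<in> IntPoly_ext D S"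
  shows "smult t p \<in> IntPoly_ext D S"
proof -
  have "IntPoly_ext D S \<subseteq> {p. smult t p \<in> IntPoly_ext D S}"
    unfolding IntPoly_ext_eq_sums_of_products
  proof (rule sums_of_products_least)
    fix f s assume "f \<in> IntPoly D" "s \<in> S"
    then have "smult (t * s) f \<in> sums_of_products (\<lambda>f s. smult s f) (IntPoly D) S"
      using assms(1,2) by (intro sums_of_products_product subring_mult)
    then show "smult s f \<in> {p. smult t p \<in> sums_of_products (\<lambda>f s. smult s f) (IntPoly D) S}"
      by simp
  qed (simp_all add: sums_of_products_zero sums_of_products_add smult_add_right)
  then show ?thesis
    using assms(3) by blast
qed

lemma ideal_multipliers_IntPoly_ext:
  assumes T: "is_subring T"
  shows "is_ideal {t \<in> T. smult t p \<in> IntPoly_ext D T} T"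
  unfolding is_ideal_def
proof (intro conjI ballI)
  show "0 \<in> {t \<in> T. smult t p \<in> IntPoly_ext D T}"
    by (simp add: subring_zero[OF T] IntPoly_ext_eq_sums_of_products sums_of_products_zero)
  fix x y
  assume "x \<in> {t \<in> T. smult t p \<in> IntPoly_ext D T}" "y \<in> {t \<in> T. smult t p \<in> IntPoly_ext D T}"
  then show "x + y \<in> {t \<in> T. smult t p \<in> IntPoly_ext D T}"
    by (simp add: smult_add_left subring_add[OF T] IntPoly_ext_eq_sums_of_products
        sums_of_products_add)
next
  fix t x assume "t \<in> T" "x \<in> {t \<in> T. smult t p \<in> IntPoly_ext D T}"
  then show "t * x \<in> {t \<in> T. smult t p \<in> IntPoly_ext D T}"
    using IntPoly_ext_smult[OF T, of t "smult x p" D] by (simp add: subring_mult[OF T])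
qed blast

lemma one_mem_ext_ideal_multipliers:
  assumes Q: "quotient_field_of T" and TS: "flat_overring T S" and p: "p \<in> IntPoly_ext D S"
  shows "1 \<in> ext_ideal {t \<in> T. smult t p \<in> IntPoly_ext D T} S"
proof -
  obtain n :: nat and f s where rep: "\<forall>i<n. f i \<in> IntPoly D \<and> s i \<in> S"
    and p_eq: "p = (\<Sum>i<n. smult (s i) (f i))"
    using p unfolding IntPoly_ext_def by blast
  have "conductor T (s ` {..<n}) \<subseteq> {t \<in> T. smult t p \<in> IntPoly_ext D T}"
  proof
    fix t assume "t \<in> conductor T (s ` {..<n})"
    then have t: "t \<in> T" "\<forall>i<n. t * s i \<in> T"
      unfolding conductor_def by auto
    have "smult t p = (\<Sum>i<n. smult (t * s i) (f i))"
      by (simp add: p_eq smult_sum_right)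
    also have "\<dots> \<in> IntPoly_ext D T"
      unfolding IntPoly_ext_def using rep t(2)
      by (intro CollectI exI[of _ n] exI[of _ f] exI[of _ "\<lambda>i. t * s i"]) simp
    finally show "t \<in> {t \<in> T. smult t p \<in> IntPoly_ext D T}"
      using t(1) by blast
  qed
  moreover have "1 \<in> ext_ideal (conductor T (s ` {..<n})) S"
    using rep by (intro one_mem_ext_ideal_conductor_finite[OF Q TS]) auto
  ultimately show ?thesis
    unfolding ext_ideal_eq_sums_of_products by (meson sums_of_products_mono subsetD)
qed

theorem proposition3p7:
  fixes D T :: "'k::field set" and \<Lambda> :: "'k set set"
  assumes "quotient_field_of D"
    and "flat_overring D T"
    and "\<forall>S\<in>\<Lambda>. flat_overring T S"
    and "complete_family \<Lambda> T"
    and "\<forall>S\<in>\<Lambda>. IntPoly_ext D S = IntPoly S"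
  shows "IntPoly_ext D T = IntPoly T"
proof
  have QT: "quotient_field_of T"
    using assms(1,2) quotient_field_of_overring unfolding flat_overring_def by blast
  then have T: "is_subring T"
    unfolding quotient_field_of_def by blast
  have S: "is_subring S" "T \<subseteq> S" if "S \<in> \<Lambda>" for S
    using assms(3) that unfolding flat_overring_def overring_def by auto
  have "IntPoly D \<subseteq> (\<Inter>S\<in>\<Lambda>. IntPoly S)"
    using assms(5) S(1) IntPoly_subset_IntPoly_ext subring_one by blast
  also have "\<dots> \<subseteq> IntPoly T"
    using S(2) by (intro INT_IntPoly_subset_complete_family[OF assms(4) T]) auto
  finally show "IntPoly_ext D T \<subseteq> IntPoly T"
    by (rule IntPoly_ext_subset_IntPoly[OF T])
  show "IntPoly T \<subseteq> IntPoly_ext D T"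
  proof
    fix p assume "p \<in> IntPoly T"
    then have "p \<in> IntPoly_ext D S" if "S \<in> \<Lambda>" for S
      using that assms(3,5) IntPoly_subset_flat_overring[OF QT] by blast
    then have "1 \<in> (\<Inter>S\<in>\<Lambda>. ext_ideal {t \<in> T. smult t p \<in> IntPoly_ext D T} S)"
      using assms(3) one_mem_ext_ideal_multipliers[OF QT] by blast
    then have "1 \<in> {t \<in> T. smult t p \<in> IntPoly_ext D T}"
      using assms(4) ideal_multipliers_IntPoly_ext[OF T] unfolding complete_family_def by blast
    then show "p \<in> IntPoly_ext D T"
      by simp
  qed
qed

end
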